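(* Let $T$ be a commutative ring with identity, $S$ a unital subring and $I$ a nil ideal of $T$ with $T=S+I$ and $S\cap I=\{0\}$. If $S$ is roughly complemented and $I$ is an atorsion $S$-module, then $T$ is roughly complemented. If furthermore $I^2=0$, then the converse holds. In particular, for a commutative ring $R$ and $R$-module $M$, $R\propto M$ is roughly complemented if and only if $R$ is roughly complemented and $M$ is an atorsion $R$-module.
   Context: For a ring $A$: $\mathfrak{N}(A)$ is the nilradical, $\mathrm{reg}(A)$ the regular elements, $\mathrm{areg}(A)=\{x: x+\mathfrak{N}(A)\in\mathrm{reg}(A/\mathfrak{N}(A))\}$. $A$ is roughly complemented if for every $a\in A$ there is $b$ with $ab=0$ and $a+b\in\mathrm{areg}(A)$. An $A$-module $M$ is atorsion if for each $m\in M$ there is $r\in\mathrm{areg}(A)$ with $rm=0$. $R\propto M$ is $R\times M$ with coordinatewise addition and $(r,m)(s,n)=(rs,rn+sm)$. *)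

theory Defs
  imports "HOL-Algebra.Algebra"
begin

definition nilradical :: "('a, 'b) ring_scheme \<Rightarrow> 'a set" where
  "nilradical A = {x \<in> carrier A. \<exists>n::nat. x [^]\<^bsub>A\<^esub> n = \<zero>\<^bsub>A\<^esub>}"

definition reg :: "('a, 'b) ring_scheme \<Rightarrow> 'a set" where
  "reg A = {x \<in> carrier A. \<forall>y \<in> carrier A. x \<otimes>\<^bsub>A\<^esub> y = \<zero>\<^bsub>A\<^esub> \<longrightarrow> y = \<zero>\<^bsub>A\<^esub>}"

definition areg :: "('a, 'b) ring_scheme \<Rightarrow> 'a set" where
  "areg A = {x \<in> carrier A. nilradical A +>\<^bsub>A\<^esub> x \<in> reg (A Quot nilradical A)}"

definition roughly_complemented :: "('a, 'b) ring_scheme \<Rightarrow> bool" where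
  "roughly_complemented A \<longleftrightarrow>
     (\<forall>a \<in> carrier A. \<exists>b \<in> carrier A. a \<otimes>\<^bsub>A\<^esub> b = \<zero>\<^bsub>A\<^esub> \<and> a \<oplus>\<^bsub>A\<^esub> b \<in> areg A)"

definition atorsion :: "('a, 'c) ring_scheme \<Rightarrow> ('a, 'b, 'd) module_scheme \<Rightarrow> bool" where
  "atorsion A M \<longleftrightarrow> (\<forall>m \<in> carrier M. \<exists>r \<in> areg A. r \<odot>\<^bsub>M\<^esub> m = \<zero>\<^bsub>M\<^esub>)"

text \<open>An ideal I of T regarded as a module over a subring S of T (action = multiplication in T).\<close>
definition ideal_as_module :: "('a, 'b) ring_scheme \<Rightarrow> 'a set \<Rightarrow> ('a, 'a) module" where
  "ideal_as_module T I = \<lparr>carrier = I, monoid.mult = monoid.mult T, one = one T, ring.zero = ring.zero T,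
                           ring.add = ring.add T, smult = monoid.mult T\<rparr>"

definition idealization :: "('a, 'c) ring_scheme \<Rightarrow> ('a, 'b, 'd) module_scheme \<Rightarrow> ('a \<times> 'b) ring" where
  "idealization R M = \<lparr>carrier = carrier R \<times> carrier M,
     monoid.mult = (\<lambda>(r, m) (s, n). (r \<otimes>\<^bsub>R\<^esub> s, (r \<odot>\<^bsub>M\<^esub> n) \<oplus>\<^bsub>M\<^esub> (s \<odot>\<^bsub>M\<^esub> m))),
     one = (\<one>\<^bsub>R\<^esub>, \<zero>\<^bsub>M\<^esub>),
     ring.zero = (\<zero>\<^bsub>R\<^esub>, \<zero>\<^bsub>M\<^esub>),
     ring.add = (\<lambda>(r, m) (s, n). (r \<oplus>\<^bsub>R\<^esub> s, m \<oplus>\<^bsub>M\<^esub> n))\<rparr>"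

end

theory Submission
  imports Defs
begin

(* The key observation is that areg T does not see nilpotent summands: for s \<in> S and i \<in> I,
   s + i \<in> areg T iff s \<in> areg S.  Given a = s + i, pick a complement s' of s in S and an
   element r \<in> areg S annihilating i s' (atorsion); then s' r complements a, since s + s' r
   stays in areg S whenever s s' = 0 and s + s' \<in> areg S.  Conversely, decomposing a
   complement s' + i' of s \<in> S (resp. of m \<in> I) taken in T yields the complement s' of s in S
   (resp., as I^2 = 0, an element s' \<in> areg S annihilating m).  The idealization R \<propto> M is
   treated by the same computations, its nilradical being N(R) \<times> M. *)

lemma nat_pow_carrier_update [simp]: "x [^]\<^bsub>A\<lparr>carrier := S\<rparr>\<^esub> (n::nat) = x [^]\<^bsub>A\<^esub> n"
  by (induct n) simp_all

context cring
begin

lemma nilradical_subset: "nilradical R \<subseteq> carrier R"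
  unfolding nilradical_def by auto

lemma nilradical_mult_closed:
  assumes "x \<in> nilradical R" and "r \<in> carrier R"
  shows "r \<otimes> x \<in> nilradical R"
proof -
  obtain n :: nat where x: "x \<in> carrier R" "x [^] n = \<zero>"
    using assms(1) unfolding nilradical_def by auto
  then have "(r \<otimes> x) [^] n = \<zero>"
    using assms(2) by (simp add: nat_pow_distrib)
  then show ?thesis
    using x assms(2) unfolding nilradical_def by auto
qed

lemma pow_add_eq_pow_add_mult:
  assumes x: "x \<in> carrier R" and y: "y \<in> carrier R"
  shows "\<exists>c \<in> carrier R. (x \<oplus> y) [^] (k::nat) = x [^] k \<oplus> y \<otimes> c"
proof (induction k)
  case 0
  show ?case using y by (intro bexI[of _ \<zero>]) simp_all
next
  case (Suc k)
  then obtain c where c: "c \<in> carrier R" "(x \<oplus> y) [^] k = x [^] k \<oplus> y \<otimes> c"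
    by blast
  have xk: "x [^] k \<in> carrier R" using x by simp
  have "(x \<oplus> y) [^] Suc k = (x [^] k \<oplus> y \<otimes> c) \<otimes> (x \<oplus> y)"
    using c by simp
  also have "\<dots> = x [^] k \<otimes> x \<oplus> y \<otimes> (x [^] k \<oplus> c \<otimes> (x \<oplus> y))"
    using xk c x y by algebra
  finally show ?case
    using xk c x y by (intro bexI[of _ "x [^] k \<oplus> c \<otimes> (x \<oplus> y)"]) simp_all
qed

lemma nilradical_add_closed:
  assumes "x \<in> nilradical R" and "y \<in> nilradical R"
  shows "x \<oplus> y \<in> nilradical R"
proof -
  obtain n m :: nat where x: "x \<in> carrier R" "x [^] n = \<zero>" and y: "y \<in> carrier R" "y [^] m = \<zero>"
    using assms unfolding nilradical_def by auto
  obtain c where c: "c \<in> carrier R" "(x \<oplus> y) [^] n = y \<otimes> c"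
    using pow_add_eq_pow_add_mult[OF x(1) y(1), of n] x y by auto
  have "(x \<oplus> y) [^] (n * m) = y [^] m \<otimes> c [^] m"
    using x y c by (simp add: nat_pow_pow[symmetric] nat_pow_distrib)
  also have "\<dots> = \<zero>" using y c by simp
  finally show ?thesis using x y unfolding nilradical_def by auto
qed

lemma nilradical_ideal: "ideal (nilradical R) R"
proof -
  have zero: "\<zero> \<in> nilradical R"
    unfolding nilradical_def by (auto intro: exI[of _ 1])
  have "\<ominus> x \<in> nilradical R" if "x \<in> nilradical R" for x
    using nilradical_mult_closed[OF that, of "\<ominus> \<one>"] that nilradical_subset by (auto simp: l_minus)
  then have "subgroup (nilradical R) (add_monoid R)"
    using zero nilradical_subset nilradical_add_closed by (intro add.subgroupI) auto
  then show ?thesis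
    using nilradical_mult_closed nilradical_subset
    by (intro idealI[OF ring_axioms]) (auto simp: m_comm subsetD)
qed

lemma nilradical_add_iff:
  assumes "x \<in> carrier R" and "n \<in> nilradical R"
  shows "x \<oplus> n \<in> nilradical R \<longleftrightarrow> x \<in> nilradical R"
proof -
  interpret N: ideal "nilradical R" R by (rule nilradical_ideal)
  have "x = (x \<oplus> n) \<oplus> \<ominus> n"
    using assms nilradical_subset by (auto simp: a_assoc r_neg)
  then show ?thesis
    using assms by (metis N.a_closed N.a_inv_closed)
qed

lemma square_in_nilradicalD:
  assumes "x \<in> carrier R" and "x \<otimes> x \<in> nilradical R"
  shows "x \<in> nilradical R"
proof -
  obtain n :: nat where "(x \<otimes> x) [^] n = \<zero>"
    using assms(2) unfolding nilradical_def by auto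
  then have "x [^] (n + n) = \<zero>"
    using assms(1) by (simp add: nat_pow_distrib nat_pow_mult)
  then show ?thesis
    using assms(1) unfolding nilradical_def by auto
qed

lemma orthogonal_sum_in_nilradicalD:
  assumes "u \<in> carrier R" "w \<in> carrier R" "u \<otimes> w = \<zero>" "u \<oplus> w \<in> nilradical R"
  shows "u \<in> nilradical R"
proof -
  have "u \<otimes> u = u \<otimes> (u \<oplus> w)"
    using assms by (simp add: r_distr)
  then show ?thesis
    using assms nilradical_mult_closed square_in_nilradicalD by metis
qed

lemma areg_iff:
  "x \<in> areg R \<longleftrightarrow>
     x \<in> carrier R \<and> (\<forall>y \<in> carrier R. x \<otimes> y \<in> nilradical R \<longrightarrow> y \<in> nilradical R)"
proof -
  interpret N: ideal "nilradical R" R by (rule nilradical_ideal)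
  let ?Q = "R Quot nilradical R"
  have coset_eq_zero: "nilradical R +> z = nilradical R \<longleftrightarrow> z \<in> nilradical R"
    if "z \<in> carrier R" for z
    using N.a_rcos_const N.a_rcos_self that by metis
  have carrier_Q: "carrier ?Q = (\<lambda>y. nilradical R +> y) ` carrier R"
    unfolding FactRing_def A_RCOSETS_def' by auto
  have mult_Q: "(nilradical R +> x) \<otimes>\<^bsub>?Q\<^esub> (nilradical R +> y) = nilradical R +> (x \<otimes> y)"
    if "x \<in> carrier R" "y \<in> carrier R" for x y
    using that by (simp add: FactRing_def N.rcoset_mult_add)
  have zero_Q: "\<zero>\<^bsub>?Q\<^esub> = nilradical R"
    by (simp add: FactRing_def)
  have "nilradical R +> x \<in> reg ?Q \<longleftrightarrow>
          (\<forall>y \<in> carrier R. x \<otimes> y \<in> nilradical R \<longrightarrow> y \<in> nilradical R)"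
    if "x \<in> carrier R" for x
    using that unfolding reg_def carrier_Q zero_Q
    by (simp add: mult_Q coset_eq_zero)
  then show ?thesis
    unfolding areg_def by blast
qed

lemma aregD:
  "x \<in> areg R \<Longrightarrow> y \<in> carrier R \<Longrightarrow> x \<otimes> y \<in> nilradical R \<Longrightarrow> y \<in> nilradical R"
  by (simp add: areg_iff)

lemma areg_closed: "x \<in> areg R \<Longrightarrow> x \<in> carrier R"
  by (simp add: areg_iff)

lemma areg_add_nilradical_iff:
  assumes "x \<in> carrier R" and "n \<in> nilradical R"
  shows "x \<oplus> n \<in> areg R \<longleftrightarrow> x \<in> areg R"
proof -
  have n: "n \<in> carrier R" using assms(2) nilradical_subset by auto
  have "(x \<oplus> n) \<otimes> y \<in> nilradical R \<longleftrightarrow> x \<otimes> y \<in> nilradical R" if "y \<in> carrier R" for y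
    using that assms n nilradical_mult_closed nilradical_add_iff
    by (simp add: l_distr m_comm[of n])
  then show ?thesis
    using assms n by (simp add: areg_iff)
qed

lemma areg_add_mult:
  assumes s: "s \<in> carrier R" and s': "s' \<in> carrier R" and r: "r \<in> areg R"
    and orth: "s \<otimes> s' = \<zero>" and sum: "s \<oplus> s' \<in> areg R"
  shows "s \<oplus> s' \<otimes> r \<in> areg R"
proof -
  have r_carr: "r \<in> carrier R" using r by (rule areg_closed)
  have "y \<in> nilradical R" if y: "y \<in> carrier R" and h: "(s \<oplus> s' \<otimes> r) \<otimes> y \<in> nilradical R" for y
  proof -
    define u w where "u = s \<otimes> y" and "w = r \<otimes> (s' \<otimes> y)"
    have u: "u \<in> carrier R" and w: "w \<in> carrier R"
      unfolding u_def w_def using s s' r_carr y by auto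
    have "(s \<oplus> s' \<otimes> r) \<otimes> y = u \<oplus> w"
      unfolding u_def w_def using s s' r_carr y by algebra
    then have "u \<oplus> w \<in> nilradical R" using h by simp
    moreover have "u \<otimes> w = (s \<otimes> s') \<otimes> (r \<otimes> y \<otimes> y)"
      unfolding u_def w_def using s s' r_carr y by algebra
    then have "u \<otimes> w = \<zero>" using orth r_carr y by simp
    ultimately have "u \<in> nilradical R" and "w \<in> nilradical R"
      using u w orthogonal_sum_in_nilradicalD[of u w] orthogonal_sum_in_nilradicalD[of w u]
      by (simp_all add: a_comm m_comm)
    moreover have "(s \<oplus> s') \<otimes> y = u \<oplus> s' \<otimes> y"
      unfolding u_def using s s' y by algebra
    ultimately have "(s \<oplus> s') \<otimes> y \<in> nilradical R"
      using aregD[OF r] s' y nilradical_add_closed unfolding w_def by simp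
    then show ?thesis
      using aregD[OF sum] y by blast
  qed
  then show ?thesis
    using s s' r_carr by (simp add: areg_iff)
qed

end

lemma atorsion_ideal_as_module_iff:
  "atorsion A (ideal_as_module T I) \<longleftrightarrow> (\<forall>m \<in> I. \<exists>r \<in> areg A. r \<otimes>\<^bsub>T\<^esub> m = \<zero>\<^bsub>T\<^esub>)"
  by (simp add: atorsion_def ideal_as_module_def)

locale nil_splitting = cring T for T (structure) +
  fixes S I :: "'a set"
  assumes S_subring: "subring S T" and I_ideal: "ideal I T" and I_nil: "I \<subseteq> nilradical T"
    and carrier_split: "carrier T = S <+>\<^bsub>T\<^esub> I" and S_I_disjoint: "S \<inter> I = {\<zero>}"
begin

lemma S_subset: "S \<subseteq> carrier T"
  using subringE(1)[OF S_subring] .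

lemma I_subset: "I \<subseteq> carrier T"
  using ideal.axioms(1)[OF I_ideal] additive_subgroup.a_subset by blast

lemma cring_S: "cring (T\<lparr>carrier := S\<rparr>)"
  using subcring_iff[OF S_subset] subcringI'[OF S_subring] by blast

lemma nilradical_S: "nilradical (T\<lparr>carrier := S\<rparr>) = nilradical T \<inter> S"
  unfolding nilradical_def using S_subset by auto

lemma areg_S_iff:
  "x \<in> areg (T\<lparr>carrier := S\<rparr>) \<longleftrightarrow>
     x \<in> S \<and> (\<forall>y \<in> S. x \<otimes> y \<in> nilradical T \<longrightarrow> y \<in> nilradical T)"
  using cring.areg_iff[OF cring_S] subringE(6)[OF S_subring] unfolding nilradical_S by auto

lemma split_elem:
  assumes "t \<in> carrier T"
  obtains s i where "s \<in> S" "i \<in> I" "t = s \<oplus> i"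
  using assms unfolding carrier_split set_add_def' by blast

lemma S_I_sum_zeroD:
  assumes "s \<in> S" "i \<in> I" "s \<oplus> i = \<zero>"
  shows "s = \<zero>"
proof -
  have "s = \<ominus> i"
    using assms S_subset I_subset by (metis minus_equality subsetD)
  then have "s \<in> I"
    using assms(2) I_ideal by (simp add: additive_subgroup.a_inv_closed ideal.axioms(1))
  then show ?thesis
    using assms(1) S_I_disjoint by blast
qed

lemma areg_S_iff_areg:
  assumes s: "s \<in> S"
  shows "s \<in> areg (T\<lparr>carrier := S\<rparr>) \<longleftrightarrow> s \<in> areg T"
proof
  assume areg_S: "s \<in> areg (T\<lparr>carrier := S\<rparr>)"
  have "y \<in> nilradical T" if y: "y \<in> carrier T" and sy: "s \<otimes> y \<in> nilradical T" for y
  proof -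
    obtain s' i' where split: "s' \<in> S" "i' \<in> I" "y = s' \<oplus> i'"
      using split_elem[OF y] .
    have carr: "s \<in> carrier T" "s' \<in> carrier T" "i' \<in> carrier T"
      using s split S_subset I_subset by auto
    have i'_nil: "i' \<in> nilradical T" using split(2) I_nil by blast
    then have "s \<otimes> s' \<oplus> s \<otimes> i' \<in> nilradical T"
      using sy carr split(3) by (simp add: r_distr)
    then have "s \<otimes> s' \<in> nilradical T"
      using carr i'_nil nilradical_mult_closed nilradical_add_iff by simp
    then have "s' \<in> nilradical T"
      using areg_S split(1) unfolding areg_S_iff by blast
    then show ?thesis
      using i'_nil split(3) nilradical_add_closed by simp
  qed
  then show "s \<in> areg T"
    using s S_subset by (auto simp: areg_iff)
qed (use s S_subset in \<open>auto simp: areg_iff areg_S_iff\<close>)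

lemma areg_add_ideal_iff:
  assumes "s \<in> S" and "i \<in> I"
  shows "s \<oplus> i \<in> areg T \<longleftrightarrow> s \<in> areg (T\<lparr>carrier := S\<rparr>)"
  using assms S_subset I_nil areg_add_nilradical_iff areg_S_iff_areg by blast

lemma roughly_complemented_lift:
  assumes rc_S: "roughly_complemented (T\<lparr>carrier := S\<rparr>)"
    and torsion: "atorsion (T\<lparr>carrier := S\<rparr>) (ideal_as_module T I)"
  shows "roughly_complemented T"
  unfolding roughly_complemented_def
proof
  fix a assume "a \<in> carrier T"
  then obtain s i where split: "s \<in> S" "i \<in> I" "a = s \<oplus> i"
    by (rule split_elem)
  obtain s' where s': "s' \<in> S" "s \<otimes> s' = \<zero>" "s \<oplus> s' \<in> areg (T\<lparr>carrier := S\<rparr>)"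
    using rc_S split(1) unfolding roughly_complemented_def by auto
  have "i \<otimes> s' \<in> I"
    using I_ideal split(2) s'(1) S_subset by (simp add: ideal.I_r_closed subsetD)
  then obtain r where r: "r \<in> areg (T\<lparr>carrier := S\<rparr>)" "r \<otimes> (i \<otimes> s') = \<zero>"
    using torsion unfolding atorsion_ideal_as_module_iff by blast
  have "r \<in> S" using r(1) unfolding areg_S_iff by blast
  then have carr: "s \<in> carrier T" "i \<in> carrier T" "s' \<in> carrier T" "r \<in> carrier T"
    using split s'(1) S_subset I_subset by auto
  have "a \<otimes> (s' \<otimes> r) = (s \<otimes> s') \<otimes> r \<oplus> r \<otimes> (i \<otimes> s')"
    using carr unfolding split(3) by algebra
  then have orth: "a \<otimes> (s' \<otimes> r) = \<zero>"
    using s'(2) r(2) carr by simp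
  have "s \<oplus> s' \<otimes> r \<in> areg (T\<lparr>carrier := S\<rparr>)"
    using cring.areg_add_mult[OF cring_S, of s s' r] split(1) s' r(1) by simp
  then have "(s \<oplus> s' \<otimes> r) \<oplus> i \<in> areg T"
    using areg_add_ideal_iff split(2) subringE(6,7)[OF S_subring] split(1) s'(1) \<open>r \<in> S\<close>
    by blast
  moreover have "(s \<oplus> s' \<otimes> r) \<oplus> i = a \<oplus> s' \<otimes> r"
    using carr unfolding split(3) by algebra
  ultimately show "\<exists>b \<in> carrier T. a \<otimes> b = \<zero> \<and> a \<oplus> b \<in> areg T"
    using orth carr by auto
qed

lemma roughly_complemented_S:
  assumes rc_T: "roughly_complemented T"
  shows "roughly_complemented (T\<lparr>carrier := S\<rparr>)"
proof -
  have "\<exists>b \<in> S. a \<otimes> b = \<zero> \<and> a \<oplus> b \<in> areg (T\<lparr>carrier := S\<rparr>)" if a: "a \<in> S" for a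
  proof -
    have a_carr: "a \<in> carrier T" using a S_subset by auto
    then obtain b where b: "b \<in> carrier T" "a \<otimes> b = \<zero>" "a \<oplus> b \<in> areg T"
      using rc_T unfolding roughly_complemented_def by blast
    obtain s' i' where split: "s' \<in> S" "i' \<in> I" "b = s' \<oplus> i'"
      using split_elem[OF b(1)] .
    have carr: "s' \<in> carrier T" "i' \<in> carrier T"
      using split S_subset I_subset by auto
    have "a \<otimes> s' \<oplus> a \<otimes> i' = \<zero>"
      using b(2) a_carr carr unfolding split(3) by (simp add: r_distr)
    moreover have "a \<otimes> s' \<in> S" "a \<otimes> i' \<in> I"
      using a split subringE(6)[OF S_subring] I_ideal a_carr by (auto simp: ideal.I_l_closed)
    ultimately have "a \<otimes> s' = \<zero>"
      using S_I_sum_zeroD by blast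
    moreover have "(a \<oplus> s') \<oplus> i' \<in> areg T"
      using b(3) a_carr carr unfolding split(3) by (simp add: a_assoc)
    then have "a \<oplus> s' \<in> areg (T\<lparr>carrier := S\<rparr>)"
      using areg_add_ideal_iff split(2) subringE(7)[OF S_subring] a split(1) by auto
    ultimately show ?thesis
      using split(1) by blast
  qed
  then show ?thesis
    unfolding roughly_complemented_def by simp
qed

lemma atorsion_I:
  assumes I_square: "\<forall>x \<in> I. \<forall>y \<in> I. x \<otimes> y = \<zero>" and rc_T: "roughly_complemented T"
  shows "atorsion (T\<lparr>carrier := S\<rparr>) (ideal_as_module T I)"
  unfolding atorsion_ideal_as_module_iff
proof
  fix m assume m: "m \<in> I"
  then have m_carr: "m \<in> carrier T" using I_subset by auto
  then obtain b where b: "b \<in> carrier T" "m \<otimes> b = \<zero>" "m \<oplus> b \<in> areg T"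
    using rc_T unfolding roughly_complemented_def by blast
  obtain s' i' where split: "s' \<in> S" "i' \<in> I" "b = s' \<oplus> i'"
    using split_elem[OF b(1)] .
  have carr: "s' \<in> carrier T" "i' \<in> carrier T"
    using split S_subset I_subset by auto
  have "m \<otimes> s' \<oplus> m \<otimes> i' = \<zero>"
    using b(2) m_carr carr unfolding split(3) by (simp add: r_distr)
  then have "s' \<otimes> m = \<zero>"
    using I_square m split(2) m_carr carr by (simp add: m_comm)
  moreover have "s' \<oplus> (m \<oplus> i') \<in> areg T"
    using b(3) m_carr carr unfolding split(3) by (simp add: a_ac)
  then have "s' \<in> areg (T\<lparr>carrier := S\<rparr>)"
    using areg_add_ideal_iff split(1,2) m I_ideal by (simp add: additive_subgroup.a_closed ideal.axioms(1))
  ultimately show "\<exists>r \<in> areg (T\<lparr>carrier := S\<rparr>). r \<otimes> m = \<zero>"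
    by blast
qed

end

lemma nil_splittingI:
  "cring T \<Longrightarrow> subring S T \<Longrightarrow> ideal I T \<Longrightarrow> I \<subseteq> nilradical T \<Longrightarrow>
    carrier T = S <+>\<^bsub>T\<^esub> I \<Longrightarrow> S \<inter> I = {\<zero>\<^bsub>T\<^esub>} \<Longrightarrow> nil_splitting T S I"
  by (simp add: nil_splitting_def nil_splitting_axioms_def)

context module
begin

abbreviation RM where "RM \<equiv> idealization R M"

lemma idealization_carrier: "carrier RM = carrier R \<times> carrier M"
  by (simp add: idealization_def)

lemma idealization_mult:
  "p \<otimes>\<^bsub>RM\<^esub> q = (fst p \<otimes> fst q, fst p \<odot>\<^bsub>M\<^esub> snd q \<oplus>\<^bsub>M\<^esub> fst q \<odot>\<^bsub>M\<^esub> snd p)"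
  by (cases p; cases q) (simp add: idealization_def)

lemma idealization_add: "p \<oplus>\<^bsub>RM\<^esub> q = (fst p \<oplus> fst q, snd p \<oplus>\<^bsub>M\<^esub> snd q)"
  by (cases p; cases q) (simp add: idealization_def)

lemma idealization_one: "\<one>\<^bsub>RM\<^esub> = (\<one>, \<zero>\<^bsub>M\<^esub>)"
  by (simp add: idealization_def)

lemma idealization_zero: "\<zero>\<^bsub>RM\<^esub> = (\<zero>, \<zero>\<^bsub>M\<^esub>)"
  by (simp add: idealization_def)

lemmas idealization_simps =
  idealization_carrier idealization_mult idealization_add idealization_one idealization_zero

lemma cring_idealization: "cring RM"
proof (rule cringI)
  show "abelian_group RM"
  proof (rule abelian_groupI)
    fix x assume "x \<in> carrier RM"
    then show "\<exists>y \<in> carrier RM. y \<oplus>\<^bsub>RM\<^esub> x = \<zero>\<^bsub>RM\<^esub>"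
      by (intro bexI[of _ "(\<ominus> fst x, \<ominus>\<^bsub>M\<^esub> snd x)"]) (auto simp: idealization_simps R.l_neg M.l_neg)
  qed (auto simp: idealization_simps R.a_ac M.a_ac)
  show "comm_monoid RM"
    by (rule comm_monoidI)
      (auto simp: idealization_simps R.m_ac M.a_ac smult_r_distr smult_assoc1[symmetric])
qed (auto simp: idealization_simps R.l_distr smult_l_distr smult_r_distr M.a_ac)

lemma idealization_pow_fst:
  "x \<in> carrier RM \<Longrightarrow> fst (x [^]\<^bsub>RM\<^esub> (n::nat)) = fst x [^] n"
  by (induct n) (simp_all add: idealization_simps)

lemma nilradical_idealization:
  "nilradical RM = nilradical R \<times> carrier M"
proof (intro equalityI subsetI)
  fix p assume "p \<in> nilradical RM"
  then obtain n :: nat where p: "p \<in> carrier RM" "p [^]\<^bsub>RM\<^esub> n = \<zero>\<^bsub>RM\<^esub>"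
    unfolding nilradical_def by auto
  then have "fst p [^] n = \<zero>"
    using idealization_pow_fst[OF p(1), of n] by (simp add: idealization_simps)
  then show "p \<in> nilradical R \<times> carrier M"
    using p(1) unfolding nilradical_def idealization_simps by (auto simp: mem_Times_iff)
next
  interpret RM: cring RM by (rule cring_idealization)
  fix p assume p: "p \<in> nilradical R \<times> carrier M"
  then obtain n :: nat where n: "fst p [^] n = \<zero>"
    unfolding nilradical_def by auto
  have p_carr: "p \<in> carrier RM"
    using p nilradical_subset by (auto simp: idealization_simps mem_Times_iff)
  define q where "q = p [^]\<^bsub>RM\<^esub> n"
  have q: "q \<in> carrier RM" "fst q = \<zero>"
    unfolding q_def using p_carr n idealization_pow_fst by simp_all
  \<comment> \<open>elements with vanishing first component square to zero\<close>
  have "p [^]\<^bsub>RM\<^esub> (n + n) = q \<otimes>\<^bsub>RM\<^esub> q"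
    unfolding q_def using p_carr by (simp add: RM.nat_pow_mult)
  also have "\<dots> = \<zero>\<^bsub>RM\<^esub>"
    using q by (simp add: idealization_simps mem_Times_iff)
  finally show "p \<in> nilradical RM"
    using p_carr unfolding nilradical_def by blast
qed

lemma areg_idealization_iff:
  "(r, m) \<in> areg RM \<longleftrightarrow> r \<in> areg R \<and> m \<in> carrier M"
proof -
  have "(\<forall>y \<in> carrier RM. (r, m) \<otimes>\<^bsub>RM\<^esub> y \<in> nilradical RM \<longrightarrow> y \<in> nilradical RM) \<longleftrightarrow>
        (\<forall>a \<in> carrier R. r \<otimes> a \<in> nilradical R \<longrightarrow> a \<in> nilradical R)"
    if "r \<in> carrier R" "m \<in> carrier M"
    using that M.zero_closed
    by (auto simp: idealization_simps nilradical_idealization mem_Times_iff)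
  then show ?thesis
    unfolding cring.areg_iff[OF cring_idealization] areg_iff
    by (auto simp: idealization_carrier)
qed

lemma roughly_complemented_of_idealization:
  assumes rc: "roughly_complemented RM"
  shows "roughly_complemented R"
  unfolding roughly_complemented_def
proof
  fix r assume r: "r \<in> carrier R"
  then have "(r, \<zero>\<^bsub>M\<^esub>) \<in> carrier RM"
    by (simp add: idealization_carrier)
  then obtain b where b: "b \<in> carrier RM" "(r, \<zero>\<^bsub>M\<^esub>) \<otimes>\<^bsub>RM\<^esub> b = \<zero>\<^bsub>RM\<^esub>"
      "(r, \<zero>\<^bsub>M\<^esub>) \<oplus>\<^bsub>RM\<^esub> b \<in> areg RM"
    using rc unfolding roughly_complemented_def by blast
  then show "\<exists>b \<in> carrier R. r \<otimes> b = \<zero> \<and> r \<oplus> b \<in> areg R"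
    using r by (auto simp: idealization_simps areg_idealization_iff mem_Times_iff)
qed

lemma atorsion_of_idealization:
  assumes rc: "roughly_complemented RM"
  shows "atorsion R M"
  unfolding atorsion_def
proof
  fix m assume m: "m \<in> carrier M"
  then have "(\<zero>, m) \<in> carrier RM"
    by (simp add: idealization_carrier)
  then obtain b where b: "b \<in> carrier RM" "(\<zero>, m) \<otimes>\<^bsub>RM\<^esub> b = \<zero>\<^bsub>RM\<^esub>"
      "(\<zero>, m) \<oplus>\<^bsub>RM\<^esub> b \<in> areg RM"
    using rc unfolding roughly_complemented_def by blast
  then show "\<exists>r \<in> areg R. r \<odot>\<^bsub>M\<^esub> m = \<zero>\<^bsub>M\<^esub>"
    using m by (auto simp: idealization_simps areg_idealization_iff mem_Times_iff)
qed

lemma roughly_complemented_idealization: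
  assumes rc: "roughly_complemented R" and torsion: "atorsion R M"
  shows "roughly_complemented RM"
  unfolding roughly_complemented_def
proof
  fix a assume "a \<in> carrier RM"
  then obtain r m where a: "a = (r, m)" "r \<in> carrier R" "m \<in> carrier M"
    by (auto simp: idealization_carrier)
  obtain r' where r': "r' \<in> carrier R" "r \<otimes> r' = \<zero>" "r \<oplus> r' \<in> areg R"
    using rc a(2) unfolding roughly_complemented_def by blast
  obtain t where t: "t \<in> areg R" "t \<odot>\<^bsub>M\<^esub> (r' \<odot>\<^bsub>M\<^esub> m) = \<zero>\<^bsub>M\<^esub>"
    using torsion r'(1) a(3) unfolding atorsion_def by (meson smult_closed)
  have t_carr: "t \<in> carrier R" using t(1) by (rule areg_closed)
  have "r \<otimes> (r' \<otimes> t) = \<zero>"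
    using r' t_carr a(2) by (simp add: R.m_assoc[symmetric])
  moreover have "(r' \<otimes> t) \<odot>\<^bsub>M\<^esub> m = \<zero>\<^bsub>M\<^esub>"
    using t(2) r'(1) t_carr a(3) by (simp add: R.m_comm[of r' t] smult_assoc1)
  moreover have "r \<oplus> r' \<otimes> t \<in> areg R"
    using areg_add_mult[OF a(2) r'(1) t(1) r'(2,3)] .
  ultimately show "\<exists>b \<in> carrier RM. a \<otimes>\<^bsub>RM\<^esub> b = \<zero>\<^bsub>RM\<^esub> \<and> a \<oplus>\<^bsub>RM\<^esub> b \<in> areg RM"
    using a r'(1) t_carr
    by (intro bexI[of _ "(r' \<otimes> t, \<zero>\<^bsub>M\<^esub>)"]) (simp_all add: idealization_simps areg_idealization_iff)
qed

lemma roughly_complemented_idealization_iff: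
  "roughly_complemented RM \<longleftrightarrow> roughly_complemented R \<and> atorsion R M"
  using roughly_complemented_of_idealization atorsion_of_idealization
    roughly_complemented_idealization by blast

end

theorem mainTheorem18:
  fixes T :: "('a, 'b) ring_scheme" and S I :: "'a set"
    and R :: "('r, 'c) ring_scheme" and M :: "('r, 'm, 'd) module_scheme"
  shows "(cring T \<and> subring S T \<and> ideal I T \<and> I \<subseteq> nilradical T
          \<and> carrier T = S <+>\<^bsub>T\<^esub> I \<and> S \<inter> I = {\<zero>\<^bsub>T\<^esub>} \<longrightarrow>
          (roughly_complemented (T\<lparr>carrier := S\<rparr>) \<and> atorsion (T\<lparr>carrier := S\<rparr>) (ideal_as_module T I)
            \<longrightarrow> roughly_complemented T)
        \<and> ((\<forall>x \<in> I. \<forall>y \<in> I. x \<otimes>\<^bsub>T\<^esub> y = \<zero>\<^bsub>T\<^esub>) \<longrightarrow> roughly_complemented T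
            \<longrightarrow> roughly_complemented (T\<lparr>carrier := S\<rparr>) \<and> atorsion (T\<lparr>carrier := S\<rparr>) (ideal_as_module T I)))
       \<and> (cring R \<and> module R M \<longrightarrow>
            (roughly_complemented (idealization R M) \<longleftrightarrow> roughly_complemented R \<and> atorsion R M))"
  by (intro conjI impI; elim conjE)
    (metis nil_splittingI nil_splitting.roughly_complemented_lift nil_splitting.roughly_complemented_S
      nil_splitting.atorsion_I module.roughly_complemented_idealization_iff)+

end
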